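(* Consider a multi-threaded program in the ActiveMonitor execution model described in the context, in which every execution satisfies Rules 1 and 2 below (Rule 3 of forcing completion across different monitors is not assumed). Then every such execution is linearizable, where the invocation of a monitor operation is interpreted as the submission of its corresponding task and its response is interpreted as the completion of that task, and where the per-thread order is the thread order $<$ defined in the context. That is, there exists a legal sequential history of all operations, consistent with the order in which the monitor threads execute the tasks, that respects the thread order $<$ of every worker thread (taking as the linearization point of each operation the instant at which the monitor thread finishes executing the corresponding task). Rule 1 (Mutex invariant): all tasks of a single monitor object are executed by the same monitor thread. Rule 2: for any two tasks $s,t$ submitted to the same monitor $M$ with $proc(s)=proc(t)$, if $sub(s)<sub(t)$ then $exe(s)<exe(t)$.
   Context: Execution model (ActiveMonitor). A monitor object encapsulates shared data; each monitor object is executed by a monitor thread. Worker threads (threads created by the user program) never execute monitor methods directly: each invocation of a monitor method by a worker thread is replaced by the submission of an equivalent monitor task to the monitor thread, which executes it. A monitor task $t$ consists of a boolean precondition $P$ and a set of statements $\mathcal{S}$; $t$ is executable when $P$ holds, and then the statements of $\mathcal{S}$ may be executed to complete $t$. Each task is either blocking or non-blocking. If a worker thread submits a blocking task, it cannot execute its next instruction (in particular cannot submit another task) until the task has been completed. If it submits a non-blocking task, it continues immediately, while the task is executed by the monitor thread; if the worker thread later needs the result of a non-blocking task, it blocks until that task is completed. Notation: $proc(t)$ is the worker thread that submits task $t$; $sub(t)$ is the time at which $t$ is submitted to its monitor; $exe(t)$ is the time at which the monitor thread starts executing $t$. Thread order: let $s_1, s_2, \dots, s_m$ be the operations (tasks)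 issued by one worker thread, in the order in which the thread issues them. The thread order $<$ on them is the (transitive closure of the) relation given by: if $s_i$ is blocking then $s_i < s_j$ for all $j>i$; if $s_i$ and $s_j$ are operations on the same monitor object and $i<j$ then $s_i<s_j$; if $s_i$ is non-blocking and its result is required before $s_k$ is issued, then $s_i<s_j$ for all $j\ge k$. *)

theory Defs
  imports Complex_Main
begin

text \<open>Each task records: the worker thread submitting it (proc), its monitor
  object (mon), its position in the submitting thread's issue sequence (idx), whether it is
  blocking, for a non-blocking task the index of the first operation of the same worker thread
  before whose issue its result is required (need; None if never), the submission time (sub),
  the time the monitor thread starts executing it (exe), the completion time (fin), the monitor
  thread executing it (runner), the operation it performs (op) and its result (res).\<close>

record ('k, 'w, 'm, 'mt, 'op, 'r) am_exec =
  tasks   :: "'k set"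
  proc    :: "'k \<Rightarrow> 'w"
  mon     :: "'k \<Rightarrow> 'm"
  idx     :: "'k \<Rightarrow> nat"
  blocking :: "'k \<Rightarrow> bool"
  need    :: "'k \<Rightarrow> nat option"
  sub     :: "'k \<Rightarrow> real"
  exe     :: "'k \<Rightarrow> real"
  fin     :: "'k \<Rightarrow> real"
  runner  :: "'k \<Rightarrow> 'mt"
  op      :: "'k \<Rightarrow> 'op"
  res     :: "'k \<Rightarrow> 'r"

text \<open>Sequential specification of monitor objects: step m s o s' r means that in state s of
  monitor m the operation o is executable (its precondition holds) and its statements may
  lead to state s' returning r.\<close>

type_synonym ('m, 's, 'op, 'r) seq_spec = "'m \<Rightarrow> 's \<Rightarrow> 'op \<Rightarrow> 's \<Rightarrow> 'r \<Rightarrow> bool"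

fun is_run :: "('s \<Rightarrow> 'op \<Rightarrow> 's \<Rightarrow> 'r \<Rightarrow> bool) \<Rightarrow> 's \<Rightarrow> ('op \<times> 'r) list \<Rightarrow> bool" where
  "is_run st s [] = True"
| "is_run st s ((o1, r) # xs) = (\<exists>s'. st s o1 s' r \<and> is_run st s' xs)"

definition legal_for :: "('m, 's, 'op, 'r) seq_spec \<Rightarrow> ('m \<Rightarrow> 's)
    \<Rightarrow> ('k, 'w, 'm, 'mt, 'op, 'r) am_exec \<Rightarrow> 'm \<Rightarrow> 'k list \<Rightarrow> bool" where
  "legal_for spec init E m xs \<longleftrightarrow>
     is_run (spec m) (init m) (map (\<lambda>t. (op E t, res E t)) xs)"

definition legal_history :: "('m, 's, 'op, 'r) seq_spec \<Rightarrow> ('m \<Rightarrow> 's)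
    \<Rightarrow> ('k, 'w, 'm, 'mt, 'op, 'r) am_exec \<Rightarrow> 'k list \<Rightarrow> bool" where
  "legal_history spec init E L \<longleftrightarrow>
     (\<forall>m. legal_for spec init E m (filter (\<lambda>t. mon E t = m) L))"

definition am_execution :: "('m, 's, 'op, 'r) seq_spec \<Rightarrow> ('m \<Rightarrow> 's)
    \<Rightarrow> ('k, 'w, 'm, 'mt, 'op, 'r) am_exec \<Rightarrow> bool" where
  "am_execution spec init E \<longleftrightarrow>
     finite (tasks E)
   \<comment> \<open>each worker thread issues its operations one after another, in the order given by idx\<close>
   \<and> (\<forall>s\<in>tasks E. \<forall>t\<in>tasks E. proc E s = proc E t \<and> idx E s = idx E t \<longrightarrow> s = t)
   \<and> (\<forall>s\<in>tasks E. \<forall>t\<in>tasks E. proc E s = proc E t \<and> idx E s < idx E t \<longrightarrow> sub E s < sub E t)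
   \<comment> \<open>a task is executed after it is submitted and completes after execution starts\<close>
   \<and> (\<forall>t\<in>tasks E. sub E t \<le> exe E t \<and> exe E t < fin E t)
   \<comment> \<open>blocking task: the thread cannot submit anything until the task is completed\<close>
   \<and> (\<forall>s\<in>tasks E. \<forall>t\<in>tasks E. blocking E s \<and> proc E s = proc E t \<and> idx E s < idx E t
          \<longrightarrow> fin E s \<le> sub E t)
   \<comment> \<open>non-blocking task whose result is required before operation number k is issued\<close>
   \<and> (\<forall>s\<in>tasks E. \<forall>t\<in>tasks E. \<forall>k. \<not> blocking E s \<and> need E s = Some k
          \<and> proc E s = proc E t \<and> k \<le> idx E t \<longrightarrow> fin E s \<le> sub E t)
   \<comment> \<open>a monitor thread executes one task at a time\<close>
   \<and> (\<forall>s\<in>tasks E. \<forall>t\<in>tasks E. runner E s = runner E t \<and> s \<noteq> t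
          \<longrightarrow> fin E s \<le> exe E t \<or> fin E t \<le> exe E s)
   \<comment> \<open>each monitor's tasks, in the order the monitor executes them, respect the sequential
       specification (preconditions hold when executed, results as recorded)\<close>
   \<and> (\<forall>m. \<exists>xs. set xs = {t\<in>tasks E. mon E t = m}
          \<and> sorted_wrt (\<lambda>a b. exe E a < exe E b) xs \<and> legal_for spec init E m xs)"

definition rule1 :: "('k, 'w, 'm, 'mt, 'op, 'r) am_exec \<Rightarrow> bool" where
  "rule1 E \<longleftrightarrow> (\<forall>s\<in>tasks E. \<forall>t\<in>tasks E. mon E s = mon E t \<longrightarrow> runner E s = runner E t)"

definition rule2 :: "('k, 'w, 'm, 'mt, 'op, 'r) am_exec \<Rightarrow> bool" where
  "rule2 E \<longleftrightarrow> (\<forall>s\<in>tasks E. \<forall>t\<in>tasks E.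
      mon E s = mon E t \<and> proc E s = proc E t \<and> sub E s < sub E t \<longrightarrow> exe E s < exe E t)"

definition thread_step :: "('k, 'w, 'm, 'mt, 'op, 'r) am_exec \<Rightarrow> 'k \<Rightarrow> 'k \<Rightarrow> bool" where
  "thread_step E s t \<longleftrightarrow> s \<in> tasks E \<and> t \<in> tasks E \<and> proc E s = proc E t \<and> idx E s < idx E t
     \<and> (blocking E s \<or> mon E s = mon E t
        \<or> (\<not> blocking E s \<and> (\<exists>k. need E s = Some k \<and> k \<le> idx E t)))"

definition thread_order :: "('k, 'w, 'm, 'mt, 'op, 'r) am_exec \<Rightarrow> 'k \<Rightarrow> 'k \<Rightarrow> bool" where
  "thread_order E = (thread_step E)\<^sup>+\<^sup>+"

definition before :: "'k list \<Rightarrow> 'k \<Rightarrow> 'k \<Rightarrow> bool" where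
  "before L a b \<longleftrightarrow> (\<exists>i j. i < j \<and> j < length L \<and> L ! i = a \<and> L ! j = b)"

end

theory Submission
  imports Defs
begin

(* The linearization is simply the list of all tasks sorted by completion time fin.
   The argument has three ingredients:
   (1) Mutual exclusion: by Rule 1 all tasks of one monitor run on the same monitor
       thread, which executes one task at a time; so on a fixed monitor the execution
       order coincides with the completion order.
   (2) Every generating step of the thread order increases completion time: a blocking
       task or a needed non-blocking task completes before the next task is submitted,
       and two tasks of one thread on the same monitor are executed in submission order
       (Rule 2), hence by (1) completed in that order.  By induction the whole thread
       order is contained in the completion order.
   (3) Restricted to one monitor, a completion-ordered list is exactly the execution-
       ordered list the execution model certifies as legal, since both are strictly
       sorted by fin.
   Real-time order (fin a < sub b) is contained in completion order because sub b <= fin b. *)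

lemma before_if_sorted_key_less:
  fixes f :: "'a \<Rightarrow> 'b::linorder"
  assumes sorted: "sorted (map f L)"
    and a: "a \<in> set L" and b: "b \<in> set L" and less: "f a < f b"
  shows "before L a b"
proof -
  obtain i where i: "i < length L" "L ! i = a" using a by (auto simp: in_set_conv_nth)
  obtain j where j: "j < length L" "L ! j = b" using b by (auto simp: in_set_conv_nth)
  have "i < j"
  proof (rule ccontr)
    assume "\<not> i < j"
    then have "f b \<le> f a"
      using sorted_nth_mono[OF sorted, of j i] i j by simp
    with less show False by simp
  qed
  with i j show ?thesis unfolding before_def by blast
qed

text \<open>A list strictly sorted by a key is the unique distinct list with its element set that is
  sorted by that key (strict sortedness makes the key injective on the elements).\<close>

lemma sorted_key_list_unique:
  fixes f :: "'a \<Rightarrow> 'b::linorder"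
  assumes strict: "sorted_wrt (\<lambda>a b. f a < f b) xs"
    and sorted: "sorted (map f ys)" and dist: "distinct ys"
    and same_set: "set ys = set xs"
  shows "ys = xs"
proof -
  have "sorted_wrt (<) (map f xs)" using strict by (simp add: sorted_wrt_map)
  then have xs_map: "sorted (map f xs)" "distinct (map f xs)"
    by (auto simp: strict_sorted_iff)
  then have inj: "inj_on f (set ys \<union> set xs)"
    using same_set by (simp add: distinct_map)
  have "distinct (map f ys)"
    using dist inj by (simp add: distinct_map inj_on_Un)
  then show ?thesis
    using map_sorted_distinct_set_unique[OF inj sorted _ xs_map] same_set by simp
qed

lemma same_monitor_serialized:
  assumes exec: "am_execution spec init E" and r1: "rule1 E"
    and a: "a \<in> tasks E" and b: "b \<in> tasks E"
    and same_mon: "mon E a = mon E b" and neq: "a \<noteq> b"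
  shows "fin E a \<le> exe E b \<or> fin E b \<le> exe E a"
proof -
  have "runner E a = runner E b" using r1 a b same_mon unfolding rule1_def by blast
  with exec a b neq show ?thesis unfolding am_execution_def by blast
qed

lemma same_monitor_exe_less_fin_less:
  assumes exec: "am_execution spec init E" and r1: "rule1 E"
    and a: "a \<in> tasks E" and b: "b \<in> tasks E"
    and same_mon: "mon E a = mon E b" and exe_less: "exe E a < exe E b"
  shows "fin E a < fin E b"
proof -
  have durations: "exe E a < fin E a" "exe E b < fin E b"
    using exec a b unfolding am_execution_def by auto
  from exe_less have "a \<noteq> b" by auto
  with same_monitor_serialized[OF exec r1 a b same_mon]
  have "fin E a \<le> exe E b \<or> fin E b \<le> exe E a" .
  with durations exe_less show ?thesis by auto
qed

lemma thread_step_fin_less: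
  assumes exec: "am_execution spec init E" and r1: "rule1 E" and r2: "rule2 E"
    and step: "thread_step E s t"
  shows "fin E s < fin E t"
proof -
  have s: "s \<in> tasks E" and t: "t \<in> tasks E"
    and same_proc: "proc E s = proc E t" and idx_less: "idx E s < idx E t"
    using step unfolding thread_step_def by auto
  have t_bounds: "sub E t \<le> exe E t" "exe E t < fin E t"
    using exec t unfolding am_execution_def by auto
  consider (blocking) "blocking E s"
    | (same_monitor) "mon E s = mon E t"
    | (needed) k where "\<not> blocking E s" "need E s = Some k" "k \<le> idx E t"
    using step unfolding thread_step_def by blast
  then show ?thesis
  proof cases
    case blocking
    then have "fin E s \<le> sub E t"
      using exec s t same_proc idx_less unfolding am_execution_def by blast
    with t_bounds show ?thesis by linarith
  next
    case same_monitor
    have "sub E s < sub E t"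
      using exec s t same_proc idx_less unfolding am_execution_def by blast
    then have "exe E s < exe E t"
      using r2 s t same_monitor same_proc unfolding rule2_def by blast
    then show ?thesis
      using same_monitor_exe_less_fin_less[OF exec r1 s t same_monitor] by blast
  next
    case needed
    then have "fin E s \<le> sub E t"
      using exec s t same_proc unfolding am_execution_def by blast
    with t_bounds show ?thesis by linarith
  qed
qed

lemma thread_order_fin_less:
  assumes exec: "am_execution spec init E" and r1: "rule1 E" and r2: "rule2 E"
    and ord: "thread_order E a b"
  shows "a \<in> tasks E \<and> b \<in> tasks E \<and> fin E a < fin E b"
  using ord unfolding thread_order_def
proof (induction rule: tranclp_induct)
  case (base b)
  then show ?case
    using thread_step_fin_less[OF exec r1 r2] by (auto simp: thread_step_def)
next
  case (step b c)
  then show ?case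
    using thread_step_fin_less[OF exec r1 r2, of b c] by (auto simp: thread_step_def)
qed

definition completion_ordered :: "('k, 'w, 'm, 'mt, 'op, 'r) am_exec \<Rightarrow> 'k list \<Rightarrow> bool" where
  "completion_ordered E L \<longleftrightarrow> distinct L \<and> set L = tasks E \<and> sorted (map (fin E) L)"

lemma completion_ordered_exists:
  assumes "finite (tasks E)"
  shows "\<exists>L. completion_ordered E L"
proof -
  obtain xs where "set xs = tasks E" "distinct xs"
    using finite_distinct_list[OF assms] by blast
  then have "completion_ordered E (sort_key (fin E) xs)"
    unfolding completion_ordered_def by (simp add: sorted_sort_key)
  then show ?thesis ..
qed

text \<open>A completion-ordered history is legal: its restriction to a monitor is the legal
  execution-ordered sequence of that monitor, both being strictly sorted by fin.\<close>

lemma completion_ordered_legal: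
  assumes exec: "am_execution spec init E" and r1: "rule1 E"
    and L: "completion_ordered E L"
  shows "legal_history spec init E L"
  unfolding legal_history_def
proof
  fix m
  obtain xs where xs_set: "set xs = {t \<in> tasks E. mon E t = m}"
    and xs_exe: "sorted_wrt (\<lambda>a b. exe E a < exe E b) xs"
    and xs_legal: "legal_for spec init E m xs"
    using exec unfolding am_execution_def by blast
  have xs_fin: "sorted_wrt (\<lambda>a b. fin E a < fin E b) xs"
  proof (rule sorted_wrt_mono_rel[OF _ xs_exe])
    fix a b assume "a \<in> set xs" "b \<in> set xs" "exe E a < exe E b"
    with xs_set show "fin E a < fin E b"
      using same_monitor_exe_less_fin_less[OF exec r1] by auto
  qed
  let ?F = "filter (\<lambda>t. mon E t = m) L"
  have "?F = xs"
  proof (rule sorted_key_list_unique[OF xs_fin])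
    show "sorted (map (fin E) ?F)" "distinct ?F"
      using L unfolding completion_ordered_def by (auto simp: sorted_filter)
    show "set ?F = set xs"
      using L xs_set unfolding completion_ordered_def by auto
  qed
  with xs_legal show "legal_for spec init E m ?F" by simp
qed

theorem lemma2:
  fixes spec :: "('m, 's, 'op, 'r) seq_spec"
    and init :: "'m \<Rightarrow> 's"
    and E :: "('k, 'w, 'm, 'mt, 'op, 'r) am_exec"
  assumes "am_execution spec init E"
    and "rule1 E"
    and "rule2 E"
  shows "\<exists>L. distinct L \<and> set L = tasks E
           \<and> legal_history spec init E L
           \<and> (\<forall>a\<in>tasks E. \<forall>b\<in>tasks E. mon E a = mon E b \<and> exe E a < exe E b \<longrightarrow> before L a b)
           \<and> (\<forall>a b. thread_order E a b \<longrightarrow> before L a b)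
           \<and> (\<forall>a\<in>tasks E. \<forall>b\<in>tasks E. fin E a < sub E b \<longrightarrow> before L a b)
           \<and> (\<forall>a\<in>tasks E. \<forall>b\<in>tasks E. fin E a < fin E b \<longrightarrow> before L a b)"
proof -
  note exec = assms(1) and r1 = assms(2) and r2 = assms(3)
  have "finite (tasks E)" using exec unfolding am_execution_def by blast
  then obtain L where L: "completion_ordered E L"
    using completion_ordered_exists by blast
  have by_fin: "before L a b" if "a \<in> tasks E" "b \<in> tasks E" "fin E a < fin E b" for a b
    using before_if_sorted_key_less[of "fin E" L] L that
    unfolding completion_ordered_def by blast
  have sub_le_fin: "sub E b \<le> fin E b" if "b \<in> tasks E" for b
    using exec that unfolding am_execution_def by force
  show ?thesis
  proof (intro exI[of _ L] conjI ballI allI impI)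
    show "distinct L" "set L = tasks E"
      using L unfolding completion_ordered_def by simp_all
    show "legal_history spec init E L"
      using completion_ordered_legal[OF exec r1 L] .
  next
    fix a b assume "a \<in> tasks E" "b \<in> tasks E" "mon E a = mon E b \<and> exe E a < exe E b"
    then show "before L a b" using by_fin same_monitor_exe_less_fin_less[OF exec r1] by blast
  next
    fix a b assume "thread_order E a b"
    then show "before L a b" using by_fin thread_order_fin_less[OF exec r1 r2] by blast
  next
    fix a b assume "a \<in> tasks E" "b \<in> tasks E" "fin E a < sub E b"
    then show "before L a b" using by_fin sub_le_fin by fastforce
  next
    fix a b assume "a \<in> tasks E" "b \<in> tasks E" "fin E a < fin E b"
    then show "before L a b" using by_fin by blast
  qed
qed

end
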